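(* Let $p\ge1$ and $n\ge2$. If $K\subset\mathbb{R}^n$ is an $L_{n+p}$-star with $V(K)>0$, then $$V(\Lambda_p^{\circ}\Lambda_p^{\circ}K)\ge V(K),$$ with equality if and only if $\rho_K(u)=\rho_{\Lambda_p^{\circ}\Lambda_p^{\circ}K}(u)$ for almost all $u\in S^{n-1}$ with respect to spherical measure.
   Context: $V$ is volume in $\mathbb{R}^n$, $\omega_s=\pi^{s/2}/\Gamma(1+s/2)$, and $du$ the rotation-invariant probability measure on $S^{n-1}$. For $x,y\in\mathbb{R}^n$ let $[x,y]=\sqrt{|x|^2|y|^2-(x\cdot y)^2}$. An $L_{n+p}$-star is a set $L=\{ru: u\in S^{n-1}, 0\le r\le\rho_L(u)\}$ with $\rho_L:S^{n-1}\to[0,\infty)$ measurable and $\int_{S^{n-1}}\rho_L^{n+p}\,du<\infty$ ($\rho_L$ is its radial function). For an $L_{n+p}$-star $K$ with $V(K)>0$, $\Lambda_pK$ is the origin-symmetric convex body with support function $h_{\Lambda_pK}(x)^p=\frac{1}{\widetilde c_{n,p}V(K)}\int_K[x,y]^p\,dy$, where $\widetilde c_{n,p}=\frac{(n-1)\omega_{n-1}\omega_{n+p-2}}{(n+p)\omega_n\omega_{n+p-3}}$; $\Lambda_p^{\circ}K=\{x: x\cdot y\le1\ \forall y\in\Lambda_pK\}$ is its polar body (a convex body containing the origin in its interior, hence itself an $L_{n+p}$-star of positive volume), and $\Lambda_p^{\circ}\Lambda_p^{\circ}K=\Lambda_p^{\circ}(\Lambda_p^{\circ}K)$. *)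

theory Defs
  imports "HOL-Analysis.Analysis"
begin

definition vol :: "(real^'n) set \<Rightarrow> real" where
  "vol A = measure lebesgue A"

definition omega :: "real \<Rightarrow> real" where
  "omega s = pi powr (s / 2) / Gamma (1 + s / 2)"

text \<open>Rotation-invariant probability measure du on the unit sphere, realised as the
  push-forward of the normalised Lebesgue measure on the unit ball under x |-> x/|x|.
  It is concentrated on sphere 0 1.\<close>
definition sphere_prob :: "(real^'n) measure" where
  "sphere_prob = distr (uniform_measure lebesgue (ball 0 1)) borel (\<lambda>x. sgn x)"

definition brack :: "real^'n \<Rightarrow> real^'n \<Rightarrow> real" where
  "brack x y = sqrt ((norm x)\<^sup>2 * (norm y)\<^sup>2 - (x \<bullet> y)\<^sup>2)"

definition radial :: "(real^'n) set \<Rightarrow> real^'n \<Rightarrow> real" where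
  "radial L u = Sup {r. 0 \<le> r \<and> r *\<^sub>R u \<in> L}"

definition Lstar :: "real \<Rightarrow> (real^'n) set \<Rightarrow> bool" where
  "Lstar p L \<longleftrightarrow> (\<exists>\<rho> :: real^'n \<Rightarrow> real.
     \<rho> \<in> borel_measurable sphere_prob \<and>
     (\<forall>u\<in>sphere 0 1. 0 \<le> \<rho> u) \<and>
     integrable sphere_prob (\<lambda>u. \<rho> u powr (real CARD('n) + p)) \<and>
     L = {r *\<^sub>R u | r u. u \<in> sphere 0 1 \<and> 0 \<le> r \<and> r \<le> \<rho> u})"

definition ctilde :: "nat \<Rightarrow> real \<Rightarrow> real" where
  "ctilde n p = ((real n - 1) * omega (real n - 1) * omega (real n + p - 2)) /
                ((real n + p) * omega (real n) * omega (real n + p - 3))"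

definition hLambda :: "real \<Rightarrow> (real^'n) set \<Rightarrow> real^'n \<Rightarrow> real" where
  "hLambda p K x = ((1 / (ctilde CARD('n) p * vol K)) *
                    (LINT y:K|lebesgue. brack x y powr p)) powr (1 / p)"

definition Lambda :: "real \<Rightarrow> (real^'n) set \<Rightarrow> (real^'n) set" where
  "Lambda p K = {z. \<forall>x. z \<bullet> x \<le> hLambda p K x}"

definition polar :: "(real^'n) set \<Rightarrow> (real^'n) set" where
  "polar A = {x. \<forall>y\<in>A. x \<bullet> y \<le> 1}"

definition LambdaPolar :: "real \<Rightarrow> (real^'n) set \<Rightarrow> (real^'n) set" where
  "LambdaPolar p K = polar (Lambda p K)"

end

theory Submission
  imports Defs "HOL-Real_Asymp.Real_Asymp"
begin

text \<open>
  Write K as the star set of its radial function \<rho>, and let h_K = hLambda p K.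
  In polar coordinates h_K(x)^p is a constant divided by \<integral>\<rho>^n times the sine transform
  \<Phi>_\<rho>(x) = \<integral>\<rho>(v)^(n+p) [x,v]^p dv. As \<Phi>_\<rho>^(1/p) is a norm, LambdaPolar p K is the
  star set of 1/h_K. By Fubini, \<integral>\<sigma>^(n+p) \<Phi>_\<rho> du is symmetric in \<rho> and \<sigma>; for
  \<sigma> = 1/h_K, where \<sigma>^(n+p) h_K^p = \<sigma>^n, this gives \<integral>\<rho>^(n+p) h^p du = \<integral>\<rho>^n du with
  h the support function of Lambda p (LambdaPolar p K). Integrating Young's inequality
  (n+p) a^n \<le> n a^(n+p) h^p + p h^(-n), with equality iff a = 1/h, at a = \<rho>(u) gives
  \<integral>\<rho>^n \<le> \<integral>h^(-n), that is V(K) \<le> V(LambdaPolar p (LambdaPolar p K)), with equality iff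
  \<rho> = 1/h almost everywhere.
\<close>



section \<open>The spherical measure\<close>

lemma sets_sphere_prob [simp, measurable_cong]:
  "sets (sphere_prob :: (real^'n) measure) = sets borel"
  by (simp add: sphere_prob_def)

lemma space_sphere_prob [simp]: "space (sphere_prob :: (real^'n) measure) = UNIV"
  by (simp add: sphere_prob_def)

lemma borel_measurable_sphere_prob [simp]:
  "borel_measurable (sphere_prob :: (real^'n) measure) = borel_measurable borel"
  by (rule measurable_cong_sets) simp_all

lemma emeasure_lborel_unit_ball:
  "emeasure lborel (ball (0::real^'n) 1) = ennreal (measure lborel (ball (0::real^'n) 1))"
  using emeasure_lborel_ball_finite[of "0::real^'n" 1] by (simp add: emeasure_eq_ennreal_measure)

lemma measurable_sgn_uniform_ball:
  "sgn \<in> uniform_measure lebesgue (ball (0::real^'n) 1) \<rightarrow>\<^sub>M borel"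
  by (simp add: measurable_completion measurable_cong_sets[OF sets_uniform_measure refl])

lemma emeasure_sphere_prob_UNIV: "emeasure (sphere_prob :: (real^'n) measure) UNIV = 1"
proof -
  have "emeasure (sphere_prob :: (real^'n) measure) UNIV =
      emeasure (uniform_measure lebesgue (ball (0::real^'n) 1)) UNIV"
    unfolding sphere_prob_def by (subst emeasure_distr) (auto simp: measurable_sgn_uniform_ball)
  also have "\<dots> = 1"
    using content_ball_pos[of 1 "0::real^'n"] emeasure_lborel_unit_ball[where 'n='n]
    by (simp add: emeasure_completion ennreal_divide_self)
  finally show ?thesis .
qed

interpretation sphere_prob: finite_measure "sphere_prob :: (real^'n) measure"
  by (rule finite_measureI) (simp add: emeasure_sphere_prob_UNIV)

lemma measure_sphere_prob_UNIV [simp]: "measure (sphere_prob :: (real^'n) measure) UNIV = 1"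
  by (simp add: measure_def emeasure_sphere_prob_UNIV)

lemma nn_integral_sphere_prob:
  assumes [measurable]: "g \<in> borel_measurable (borel :: (real^'n) measure)"
  shows "(\<integral>\<^sup>+u. g u \<partial>(sphere_prob :: (real^'n) measure)) =
     (\<integral>\<^sup>+x. g (sgn x) * indicator (ball 0 1) x \<partial>lborel) / emeasure lborel (ball (0::real^'n) 1)"
proof -
  have "(\<integral>\<^sup>+u. g u \<partial>(sphere_prob :: (real^'n) measure)) =
        (\<integral>\<^sup>+x. g (sgn x) \<partial>uniform_measure lebesgue (ball (0::real^'n) 1))"
    unfolding sphere_prob_def by (rule nn_integral_distr) (auto simp: measurable_sgn_uniform_ball)
  also have "\<dots> = (\<integral>\<^sup>+x. g (sgn x) * indicator (ball 0 1) x \<partial>lebesgue) /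
      emeasure lebesgue (ball (0::real^'n) 1)"
    by (rule nn_integral_uniform_measure) (auto simp: measurable_completion)
  finally show ?thesis by (simp add: nn_integral_completion)
qed

lemma AE_sphere_prob_from_ball:
  assumes "AE x in lebesgue. x \<in> ball 0 1 \<longrightarrow> P (sgn x)"
    and [measurable]: "Measurable.pred borel P"
  shows "AE u in (sphere_prob :: (real^'n) measure). P u"
proof -
  have "AE x in uniform_measure lebesgue (ball (0::real^'n) 1). P (sgn x)"
    using assms(1) by (intro AE_uniform_measureI) auto
  then show ?thesis
    unfolding sphere_prob_def by (subst AE_distr_iff) (auto simp: measurable_sgn_uniform_ball)
qed

lemma AE_sphere_prob_norm: "AE u in (sphere_prob :: (real^'n) measure). norm u = 1"
proof (rule AE_sphere_prob_from_ball)
  show "AE x in lebesgue. x \<in> ball 0 1 \<longrightarrow> norm (sgn x) = 1"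
    by (rule AE_I'[where N="{0}"]) (auto simp: norm_sgn)
qed simp

lemma AE_sphere_probI:
  "(\<And>u. norm u = 1 \<Longrightarrow> P u) \<Longrightarrow> AE u in (sphere_prob :: (real^'n) measure). P u"
  using AE_sphere_prob_norm by (rule AE_mp) auto

section \<open>Polar coordinates\<close>

lemma nn_integral_pareto_density:
  fixes a :: real and N :: nat
  assumes a: "a > 0" and N: "N > 0"
  shows "(\<integral>\<^sup>+t. indicator {a<..} t * ennreal (N * a ^ N / t ^ (N + 1)) \<partial>lborel) = 1"
proof -
  have "(\<integral>\<^sup>+t. indicator {a<..} t * ennreal (N * a ^ N / t ^ (N + 1)) \<partial>lborel) =
        (\<integral>\<^sup>+t. ennreal (N * a ^ N / t ^ (N + 1)) * indicator {a..} t \<partial>lborel)"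
    by (rule nn_integral_cong_AE, rule AE_I'[where N="{a}"]) (auto split: split_indicator)
  also have "\<dots> = ennreal (0 - (- (a ^ N / a ^ N)))"
  proof (rule nn_integral_FTC_atLeast[where F="\<lambda>t. - (a ^ N / t ^ N)" and T=0])
    fix t assume "a \<le> t"
    then have t: "t > 0" using a by simp
    then show "0 \<le> N * a ^ N / t ^ (N + 1)" using a by simp
    show "((\<lambda>t. - (a ^ N / t ^ N)) has_real_derivative N * a ^ N / t ^ (N + 1)) (at t)"
      using t N by (auto intro!: derivative_eq_intros simp: field_simps power_Suc)
        (metis Suc_pred power_Suc)
  next
    show "((\<lambda>t. - (a ^ N / t ^ N)) \<longlongrightarrow> 0) at_top"
      using N by real_asymp
  qed simp
  also have "\<dots> = 1" using a by simp
  finally show ?thesis .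
qed

lemma nn_integral_lborel_scaleR:
  fixes G :: "real^'n \<Rightarrow> ennreal"
  assumes [measurable]: "G \<in> borel_measurable borel" and c: "c > 0"
  shows "(\<integral>\<^sup>+x. G x \<partial>lborel) = ennreal (c ^ CARD('n)) * (\<integral>\<^sup>+y. G (c *\<^sub>R y) \<partial>lborel)"
proof -
  have "(\<integral>\<^sup>+x. G x \<partial>lborel) = (\<integral>\<^sup>+x. G x \<partial>density (distr lborel borel (\<lambda>x. 0 + c *\<^sub>R x))
      (\<lambda>_. ennreal (\<bar>c\<bar> ^ DIM(real^'n))))"
    using lborel_affine[of c "0::real^'n"] c by simp
  then show ?thesis
    using c by (simp add: nn_integral_density nn_integral_distr nn_integral_cmult)
qed

definition pareto_weight :: "real^'n \<Rightarrow> real \<Rightarrow> ennreal" where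
  "pareto_weight x t =
     (if norm x < t then ennreal (CARD('n) * norm x ^ CARD('n) / t ^ (CARD('n) + 1)) else 0)"

definition ray_nn_integral :: "(real^'n \<Rightarrow> ennreal) \<Rightarrow> real^'n \<Rightarrow> ennreal" where
  "ray_nn_integral F u =
     (\<integral>\<^sup>+s. indicator {0<..} s * ennreal (CARD('n) * s ^ (CARD('n) - 1)) * F (s *\<^sub>R u) \<partial>lborel)"

lemma pareto_weight_measurable [measurable]:
  "(\<lambda>(x, t). pareto_weight x t) \<in> borel_measurable (lborel \<Otimes>\<^sub>M lborel)"
  "pareto_weight x \<in> borel_measurable lborel"
  unfolding pareto_weight_def by measurable

lemma ray_nn_integral_measurable [measurable]:
  assumes [measurable]: "F \<in> borel_measurable borel"
  shows "ray_nn_integral F \<in> borel_measurable borel"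
  unfolding ray_nn_integral_def by measurable

lemma nn_integral_pareto_weight:
  fixes x :: "real^'n"
  assumes "x \<noteq> 0"
  shows "(\<integral>\<^sup>+t. pareto_weight x t \<partial>lborel) = 1"
proof -
  have "(\<integral>\<^sup>+t. pareto_weight x t \<partial>lborel) = (\<integral>\<^sup>+t. indicator {norm x<..} t *
      ennreal (CARD('n) * norm x ^ CARD('n) / t ^ (CARD('n) + 1)) \<partial>lborel)"
    by (rule nn_integral_cong) (simp add: pareto_weight_def)
  then show ?thesis using nn_integral_pareto_density[of "norm x" "CARD('n)"] assms by simp
qed

lemma nn_integral_pareto_weight_rescale:
  fixes F :: "real^'n \<Rightarrow> ennreal"
  assumes [measurable]: "F \<in> borel_measurable borel"
  shows "(\<integral>\<^sup>+x. F x * pareto_weight x t \<partial>lborel) =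
    (\<integral>\<^sup>+y. indicator {0<..} t * indicator (ball 0 1) y *
       ennreal (CARD('n) * norm y ^ CARD('n) * t ^ (CARD('n) - 1)) * F (t *\<^sub>R y) \<partial>lborel)"
proof (cases "t > 0")
  case False
  then have "pareto_weight x t = 0" for x :: "real^'n"
    by (auto simp: pareto_weight_def) (meson norm_ge_zero order.strict_trans1)
  then show ?thesis using False by simp
next
  case True
  define N where "N = CARD('n)"
  have "(\<integral>\<^sup>+x. F x * pareto_weight x t \<partial>lborel) =
      (\<integral>\<^sup>+y. ennreal (t ^ N) * (F (t *\<^sub>R y) * pareto_weight (t *\<^sub>R y) t) \<partial>lborel)"
    unfolding N_def using True
    by (subst nn_integral_lborel_scaleR[of _ t]) (auto simp: nn_integral_cmult[symmetric] pareto_weight_def)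
  also have "\<dots> = (\<integral>\<^sup>+y. indicator {0<..} t * indicator (ball 0 1) y *
      ennreal (N * norm y ^ N * t ^ (N - 1)) * F (t *\<^sub>R y) \<partial>lborel)"
  proof (rule nn_integral_cong)
    fix y :: "real^'n"
    have "t ^ N * (N * (t * norm y) ^ N / t ^ (N + 1)) = N * norm y ^ N * t ^ (N - 1)"
      using True by (cases N) (auto simp: N_def field_simps power_mult_distrib)
    then show "ennreal (t ^ N) * (F (t *\<^sub>R y) * pareto_weight (t *\<^sub>R y) t) =
        indicator {0<..} t * indicator (ball 0 1) y *
        ennreal (N * norm y ^ N * t ^ (N - 1)) * F (t *\<^sub>R y)"
      using True by (auto simp: pareto_weight_def N_def ennreal_mult'[symmetric] mult_ac)
  qed
  finally show ?thesis unfolding N_def .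
qed

lemma nn_integral_ray_rescale:
  fixes F :: "real^'n \<Rightarrow> ennreal" and y :: "real^'n"
  assumes [measurable]: "F \<in> borel_measurable borel" and y: "y \<noteq> 0"
  shows "(\<integral>\<^sup>+t. indicator {0<..} t * indicator (ball 0 1) y *
       ennreal (CARD('n) * norm y ^ CARD('n) * t ^ (CARD('n) - 1)) * F (t *\<^sub>R y) \<partial>lborel) =
    indicator (ball 0 1) y * ray_nn_integral F (sgn y)"
proof -
  define N where "N = CARD('n)"
  define c where "c = 1 / norm y"
  have c: "c > 0" using y by (simp add: c_def)
  have "(\<integral>\<^sup>+t. indicator {0<..} t * indicator (ball 0 1) y *
      ennreal (N * norm y ^ N * t ^ (N - 1)) * F (t *\<^sub>R y) \<partial>lborel) =
    (\<integral>\<^sup>+s. ennreal c * (indicator {0<..} (c * s) * indicator (ball 0 1) y *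
      ennreal (N * norm y ^ N * (c * s) ^ (N - 1)) * F ((c * s) *\<^sub>R y)) \<partial>lborel)"
    using c by (subst lborel_real_affine[of c 0]) (auto simp: nn_integral_density nn_integral_distr)
  also have "\<dots> = (\<integral>\<^sup>+s. indicator (ball 0 1) y *
      (indicator {0<..} s * ennreal (N * s ^ (N - 1)) * F (s *\<^sub>R sgn y)) \<partial>lborel)"
  proof (rule nn_integral_cong)
    fix s :: real
    show "ennreal c * (indicator {0<..} (c * s) * indicator (ball 0 1) y *
        ennreal (N * norm y ^ N * (c * s) ^ (N - 1)) * F ((c * s) *\<^sub>R y)) =
      indicator (ball 0 1) y * (indicator {0<..} s * ennreal (N * s ^ (N - 1)) * F (s *\<^sub>R sgn y))"
    proof (cases "s > 0")
      case True
      have "(c * s) *\<^sub>R y = s *\<^sub>R sgn y"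
        using y by (simp add: c_def sgn_div_norm divide_inverse_commute)
      then have "ennreal c * (indicator {0<..} (c * s) * indicator (ball 0 1) y *
          ennreal (N * norm y ^ N * (c * s) ^ (N - 1)) * F ((c * s) *\<^sub>R y)) =
        indicator (ball 0 1) y * F (s *\<^sub>R sgn y) * ennreal (c * (N * norm y ^ N * (c * s) ^ (N - 1)))"
        using True c by (simp add: ennreal_mult mult_ac)
      also have "c * (N * norm y ^ N * (c * s) ^ (N - 1)) = N * s ^ (N - 1)"
        using y by (cases N) (auto simp: N_def c_def field_simps power_mult_distrib)
      finally show ?thesis using True by (simp add: mult_ac)
    qed (use c in \<open>simp add: zero_less_mult_iff\<close>)
  qed
  also have "\<dots> = indicator (ball 0 1) y * ray_nn_integral F (sgn y)"
    unfolding ray_nn_integral_def N_def by (rule nn_integral_cmult) measurable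
  finally show ?thesis unfolding N_def .
qed

(* Insert the weight pareto_weight x t, which integrates to 1 in t, swap the integrals,
   and substitute x = t y, then t = s / |y|. *)
lemma nn_integral_polar:
  fixes F :: "real^'n \<Rightarrow> ennreal"
  assumes [measurable]: "F \<in> borel_measurable borel"
  shows "(\<integral>\<^sup>+x. F x \<partial>lborel) =
    emeasure lborel (ball (0::real^'n) 1) * (\<integral>\<^sup>+u. ray_nn_integral F u \<partial>sphere_prob)"
proof -
  have [measurable]: "ball (0::real^'n) 1 \<in> sets borel" by simp
  have nonzero: "AE x in lborel. x \<noteq> (0::real^'n)"
    by (rule AE_I'[where N="{0}"]) auto
  have "(\<integral>\<^sup>+x. F x \<partial>lborel) = (\<integral>\<^sup>+x. (\<integral>\<^sup>+t. F x * pareto_weight x t \<partial>lborel) \<partial>lborel)"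
    using nonzero
    by (intro nn_integral_cong_AE) (auto elim!: AE_mp simp: nn_integral_cmult nn_integral_pareto_weight)
  also have "\<dots> = (\<integral>\<^sup>+t. (\<integral>\<^sup>+x. F x * pareto_weight x t \<partial>lborel) \<partial>lborel)"
    by (rule lborel_pair.Fubini'[symmetric]) measurable
  also have "\<dots> = (\<integral>\<^sup>+y. (\<integral>\<^sup>+t. indicator {0<..} t * indicator (ball 0 1) y *
      ennreal (CARD('n) * norm y ^ CARD('n) * t ^ (CARD('n) - 1)) * F (t *\<^sub>R y) \<partial>lborel) \<partial>lborel)"
    unfolding nn_integral_pareto_weight_rescale[OF assms] by (rule lborel_pair.Fubini') measurable
  also have "\<dots> = (\<integral>\<^sup>+y. indicator (ball 0 1) y * ray_nn_integral F (sgn y) \<partial>lborel)"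
    using nonzero by (intro nn_integral_cong_AE) (elim AE_mp, intro AE_I2 impI nn_integral_ray_rescale[OF assms])
  also have "\<dots> = emeasure lborel (ball (0::real^'n) 1) * (\<integral>\<^sup>+u. ray_nn_integral F u \<partial>sphere_prob)"
    using emeasure_lborel_ball_finite[of "0::real^'n" 1] content_ball_pos[of 1 "0::real^'n"]
    by (simp add: nn_integral_sphere_prob emeasure_lborel_unit_ball ennreal_times_divide
        mult.commute[of "ennreal _"] mult.commute[of "indicator _ _"] mult_divide_eq_ennreal)
  finally show ?thesis .
qed

section \<open>Star sets\<close>

definition star_set :: "(real^'n \<Rightarrow> real) \<Rightarrow> (real^'n) set" where
  "star_set \<rho> = {r *\<^sub>R u | r u. u \<in> sphere 0 1 \<and> 0 \<le> r \<and> r \<le> \<rho> u}"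

lemma Lstar_iff_star_set:
  fixes L :: "(real^'n) set"
  shows "Lstar p L \<longleftrightarrow> (\<exists>\<rho>. \<rho> \<in> borel_measurable borel \<and> (\<forall>u\<in>sphere 0 1. 0 \<le> \<rho> u) \<and>
     integrable sphere_prob (\<lambda>u. \<rho> u powr (real CARD('n) + p)) \<and> L = star_set \<rho>)"
  by (simp add: Lstar_def star_set_def)

lemma scaleR_mem_star_set_iff:
  assumes u: "norm u = 1" and s: "s > 0"
  shows "s *\<^sub>R u \<in> star_set \<rho> \<longleftrightarrow> s \<le> \<rho> u"
proof
  assume "s *\<^sub>R u \<in> star_set \<rho>"
  then obtain r v where rv: "s *\<^sub>R u = r *\<^sub>R v" "norm v = 1" "0 \<le> r" "r \<le> \<rho> v"
    unfolding star_set_def by auto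
  have "s = r" using arg_cong[OF rv(1), of norm] u s rv(2,3) by simp
  then show "s \<le> \<rho> u" using rv s by simp
next
  assume "s \<le> \<rho> u"
  then show "s *\<^sub>R u \<in> star_set \<rho>" unfolding star_set_def using u s by force
qed

lemma zero_mem_star_set:
  assumes "\<forall>u\<in>sphere (0::real^'n) 1. 0 \<le> \<rho> u"
  shows "0 \<in> star_set \<rho>"
proof -
  obtain u :: "real^'n" where "norm u = 1" using vector_choose_size[of 1] by auto
  then show ?thesis unfolding star_set_def using assms by (intro CollectI exI[of _ 0] exI[of _ u]) auto
qed

lemma star_set_eq:
  assumes "\<forall>u\<in>sphere (0::real^'n) 1. 0 \<le> \<rho> u"
  shows "star_set \<rho> = {x. x = 0 \<or> norm x \<le> \<rho> (sgn x)}"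
proof (intro set_eqI)
  fix x :: "real^'n"
  show "x \<in> star_set \<rho> \<longleftrightarrow> x \<in> {x. x = 0 \<or> norm x \<le> \<rho> (sgn x)}"
  proof (cases "x = 0")
    case False
    then have "x = norm x *\<^sub>R sgn x" "norm (sgn x) = 1" "norm x > 0"
      by (auto simp: norm_sgn sgn_div_norm)
    then show ?thesis using False scaleR_mem_star_set_iff[of "sgn x" "norm x" \<rho>] by auto
  qed (use zero_mem_star_set[OF assms] in simp)
qed

lemma star_set_borel [measurable]:
  assumes "\<forall>u\<in>sphere (0::real^'n) 1. 0 \<le> \<rho> u" and [measurable]: "\<rho> \<in> borel_measurable borel"
  shows "star_set \<rho> \<in> sets borel"
  unfolding star_set_eq[OF assms(1)] by measurable

lemma radial_star_set:
  assumes "\<forall>u\<in>sphere (0::real^'n) 1. 0 \<le> \<rho> u" and u: "norm u = 1"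
  shows "radial (star_set \<rho>) u = \<rho> u"
proof -
  have "{r. 0 \<le> r \<and> r *\<^sub>R u \<in> star_set \<rho>} = {0..\<rho> u}"
    using scaleR_mem_star_set_iff[OF u, of _ \<rho>] zero_mem_star_set[OF assms(1)] assms
    by (auto simp: order_le_less)
  moreover have "0 \<le> \<rho> u" using assms by auto
  ultimately show ?thesis unfolding radial_def by simp
qed

lemma nn_integral_radial_power:
  fixes r q :: real and N :: nat
  assumes r: "r \<ge> 0" and q: "q \<ge> 0" and N: "N > 0"
  shows "(\<integral>\<^sup>+s. indicator {0<..} s * ennreal (N * s ^ (N - 1)) * (indicator {..r} s * ennreal (s powr q)) \<partial>lborel)
     = ennreal (N / (N + q) * r powr (N + q))"
proof -
  have "((\<lambda>s. s powr (N - 1 + q)) has_integral (r powr (N - 1 + q + 1) / (N - 1 + q + 1))) {0..r}"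
    by (rule has_integral_powr_from_0) (use N q r in auto)
  from nn_integral_has_integral_lebesgue[OF _ this]
  have power_integral: "(\<integral>\<^sup>+s. indicator {0..r} s * ennreal (s powr (N - 1 + q)) \<partial>lborel) =
      ennreal (r powr (N - 1 + q + 1) / (N - 1 + q + 1))"
    by (simp add: indicator_mult_ennreal)
  have integrand: "indicator {0<..} s * ennreal (N * s ^ (N - 1)) * (indicator {..r} s * ennreal (s powr q)) =
      ennreal N * (indicator {0..r} s * ennreal (s powr (N - 1 + q)))" if "s \<noteq> 0" for s :: real
  proof (cases "0 < s \<and> s \<le> r")
    case True
    then have "s ^ (N - 1) * s powr q = s powr (N - 1 + q)"
      by (simp add: powr_add powr_realpow)
    then have "ennreal (N * s ^ (N - 1)) * ennreal (s powr q) = ennreal N * ennreal (s powr (N - 1 + q))"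
      using True by (simp add: ennreal_mult[symmetric] mult_ac)
    then show ?thesis using True by (simp add: indicator_def)
  qed (use that in \<open>auto simp: indicator_def\<close>)
  have "AE s in lborel. s \<noteq> (0::real)"
    by (rule AE_I'[where N="{0}"]) auto
  then have "(\<integral>\<^sup>+s. indicator {0<..} s * ennreal (N * s ^ (N - 1)) * (indicator {..r} s * ennreal (s powr q)) \<partial>lborel)
     = (\<integral>\<^sup>+s. ennreal N * (indicator {0..r} s * ennreal (s powr (N - 1 + q))) \<partial>lborel)"
    by (intro nn_integral_cong_AE) (elim AE_mp, intro AE_I2 impI integrand)
  then show ?thesis
    using power_integral N q r by (simp add: nn_integral_cmult ennreal_mult[symmetric] of_nat_diff field_simps)
qed

lemma nn_integral_star_set_homogeneous:
  fixes \<rho> g :: "real^'n \<Rightarrow> real" and q :: real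
  assumes nn: "\<forall>u\<in>sphere (0::real^'n) 1. 0 \<le> \<rho> u"
    and [measurable]: "\<rho> \<in> borel_measurable borel" "g \<in> borel_measurable borel"
    and g0: "\<And>x. 0 \<le> g x" and q: "q \<ge> 0"
    and hom: "\<And>u s. norm u = 1 \<Longrightarrow> s > 0 \<Longrightarrow> g (s *\<^sub>R u) = s powr q * g u"
  shows "(\<integral>\<^sup>+x. indicator (star_set \<rho>) x * ennreal (g x) \<partial>lborel) =
    emeasure lborel (ball (0::real^'n) 1) *
    (\<integral>\<^sup>+u. ennreal (CARD('n) / (CARD('n) + q) * \<rho> u powr (CARD('n) + q) * g u) \<partial>sphere_prob)"
proof -
  have [measurable]: "star_set \<rho> \<in> sets borel" by (rule star_set_borel[OF nn]) simp
  have "ray_nn_integral (\<lambda>x. indicator (star_set \<rho>) x * ennreal (g x)) u =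
      ennreal (CARD('n) / (CARD('n) + q) * \<rho> u powr (CARD('n) + q) * g u)" if u: "norm u = 1" for u
  proof -
    have "ray_nn_integral (\<lambda>x. indicator (star_set \<rho>) x * ennreal (g x)) u =
       (\<integral>\<^sup>+s. (indicator {0<..} s * ennreal (CARD('n) * s ^ (CARD('n) - 1)) *
          (indicator {..\<rho> u} s * ennreal (s powr q))) * ennreal (g u) \<partial>lborel)"
      unfolding ray_nn_integral_def
    proof (rule nn_integral_cong)
      fix s :: real
      show "indicator {0<..} s * ennreal (CARD('n) * s ^ (CARD('n) - 1)) *
          (indicator (star_set \<rho>) (s *\<^sub>R u) * ennreal (g (s *\<^sub>R u))) =
        (indicator {0<..} s * ennreal (CARD('n) * s ^ (CARD('n) - 1)) *
          (indicator {..\<rho> u} s * ennreal (s powr q))) * ennreal (g u)"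
        by (cases "s > 0")
          (use scaleR_mem_star_set_iff[OF u, of s \<rho>] hom[OF u, of s] g0 in
            \<open>auto simp: indicator_def ennreal_mult mult_ac\<close>)
    qed
    also have "\<dots> = ennreal (CARD('n) / (CARD('n) + q) * \<rho> u powr (CARD('n) + q)) * ennreal (g u)"
      using nn_integral_radial_power[of "\<rho> u" q "CARD('n)"] nn u q by (simp add: nn_integral_multc)
    also have "\<dots> = ennreal (CARD('n) / (CARD('n) + q) * \<rho> u powr (CARD('n) + q) * g u)"
      using q g0 by (subst ennreal_mult[symmetric]) auto
    finally show ?thesis .
  qed
  then have "(\<integral>\<^sup>+u. ray_nn_integral (\<lambda>x. indicator (star_set \<rho>) x * ennreal (g x)) u \<partial>sphere_prob) =
     (\<integral>\<^sup>+u. ennreal (CARD('n) / (CARD('n) + q) * \<rho> u powr (CARD('n) + q) * g u) \<partial>sphere_prob)"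
    by (intro nn_integral_cong_AE AE_sphere_probI)
  then show ?thesis by (subst nn_integral_polar) simp_all
qed

definition normalized_vol :: "(real^'n \<Rightarrow> real) \<Rightarrow> real" where
  "normalized_vol \<rho> = (\<integral>u. \<rho> u powr real CARD('n) \<partial>sphere_prob)"

lemma vol_star_set:
  fixes \<rho> :: "real^'n \<Rightarrow> real"
  assumes nn: "\<forall>u\<in>sphere (0::real^'n) 1. 0 \<le> \<rho> u" and [measurable]: "\<rho> \<in> borel_measurable borel"
    and int: "integrable sphere_prob (\<lambda>u. \<rho> u powr real CARD('n))"
  shows "vol (star_set \<rho>) = measure lborel (ball (0::real^'n) 1) * normalized_vol \<rho>"
proof -
  have [measurable]: "star_set \<rho> \<in> sets borel" by (rule star_set_borel[OF nn]) simp
  have "emeasure lborel (star_set \<rho>) = (\<integral>\<^sup>+x. indicator (star_set \<rho>) x * ennreal 1 \<partial>lborel)"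
    by simp
  also have "\<dots> = emeasure lborel (ball (0::real^'n) 1) *
    (\<integral>\<^sup>+u. ennreal (CARD('n) / (CARD('n) + (0::real)) * \<rho> u powr (CARD('n) + (0::real)) * 1) \<partial>sphere_prob)"
    by (rule nn_integral_star_set_homogeneous[OF nn]) auto
  also have "\<dots> = ennreal (measure lborel (ball (0::real^'n) 1) * normalized_vol \<rho>)"
    using int by (simp add: nn_integral_eq_integral emeasure_lborel_unit_ball normalized_vol_def
        ennreal_mult integral_nonneg_AE)
  finally show ?thesis
    unfolding vol_def by (simp add: measure_def normalized_vol_def integral_nonneg_AE)
qed

lemma integrable_powr_smaller_exponent:
  fixes \<rho> :: "real^'n \<Rightarrow> real"
  assumes [measurable]: "\<rho> \<in> borel_measurable borel" and ab: "0 \<le> a" "a \<le> b"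
    and nn: "\<forall>u\<in>sphere (0::real^'n) 1. 0 \<le> \<rho> u"
    and int: "integrable sphere_prob (\<lambda>u. \<rho> u powr b)"
  shows "integrable sphere_prob (\<lambda>u. \<rho> u powr a)"
proof (rule Bochner_Integration.integrable_bound)
  show "integrable sphere_prob (\<lambda>u. 1 + \<rho> u powr b)"
    using int by (intro Bochner_Integration.integrable_add) auto
  show "AE u in sphere_prob. norm (\<rho> u powr a) \<le> norm (1 + \<rho> u powr b)"
  proof (rule AE_sphere_probI)
    fix u :: "real^'n" assume "norm u = 1"
    then have r0: "0 \<le> \<rho> u" using nn by auto
    have "\<rho> u powr a \<le> 1 + \<rho> u powr b"
    proof (cases "\<rho> u \<le> 1")
      case True
      then have "\<rho> u powr a \<le> 1" using r0 ab by (simp add: powr_le1)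
      then show ?thesis using powr_ge_zero[of "\<rho> u" b] by linarith
    next
      case False
      then have "\<rho> u powr a \<le> \<rho> u powr b" using ab by (intro powr_mono) auto
      then show ?thesis by simp
    qed
    then show "norm (\<rho> u powr a) \<le> norm (1 + \<rho> u powr b)" by simp
  qed
qed simp

section \<open>The bracket [x,y]\<close>

lemma brack_sq: "(brack x y)\<^sup>2 = (norm x)\<^sup>2 * (norm y)\<^sup>2 - (x \<bullet> y)\<^sup>2"
  using Cauchy_Schwarz_ineq[of x y] unfolding brack_def power2_norm_eq_inner by simp

lemma brack_nonneg [simp]: "0 \<le> brack x y"
  using Cauchy_Schwarz_ineq[of x y] unfolding brack_def power2_norm_eq_inner by simp

lemma brack_sym: "brack x y = brack y x"
  unfolding brack_def by (simp add: inner_commute mult.commute)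

lemma brack_scaleR_left: "brack (t *\<^sub>R x) y = \<bar>t\<bar> * brack x y"
proof -
  have "(norm (t *\<^sub>R x))\<^sup>2 * (norm y)\<^sup>2 - ((t *\<^sub>R x) \<bullet> y)\<^sup>2 = t\<^sup>2 * ((norm x)\<^sup>2 * (norm y)\<^sup>2 - (x \<bullet> y)\<^sup>2)"
    by (simp add: power_mult_distrib algebra_simps)
  then show ?thesis unfolding brack_def by (simp add: real_sqrt_mult)
qed

lemma brack_scaleR_right: "brack x (t *\<^sub>R y) = \<bar>t\<bar> * brack x y"
  using brack_scaleR_left[of t y x] by (simp add: brack_sym)

lemma brack_le_norm_mult: "brack x y \<le> norm x * norm y"
proof -
  have "(brack x y)\<^sup>2 \<le> (norm x * norm y)\<^sup>2" by (simp add: brack_sq power_mult_distrib)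
  then show ?thesis by (simp add: power2_le_iff_abs_le)
qed

(* [x,y] |y| is the norm of a vector linear in x, which gives the triangle inequality below. *)
lemma brack_mult_norm: "brack x y * norm y = norm ((y \<bullet> y) *\<^sub>R x - (x \<bullet> y) *\<^sub>R y)"
proof -
  have "(norm ((y \<bullet> y) *\<^sub>R x - (x \<bullet> y) *\<^sub>R y))\<^sup>2 =
      (y \<bullet> y)\<^sup>2 * (x \<bullet> x) - 2 * (y \<bullet> y) * (x \<bullet> y)\<^sup>2 + (x \<bullet> y)\<^sup>2 * (y \<bullet> y)"
    unfolding power2_norm_eq_inner
    by (simp add: inner_diff_left inner_diff_right algebra_simps power2_eq_square inner_commute)
  also have "\<dots> = (brack x y * norm y)\<^sup>2"
    unfolding power_mult_distrib brack_sq power2_norm_eq_inner by (simp add: algebra_simps power2_eq_square)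
  finally show ?thesis
    by (metis abs_of_nonneg brack_nonneg norm_ge_zero real_sqrt_abs zero_le_mult_iff)
qed

lemma brack_add_left_le: "brack (x + x') y \<le> brack x y + brack x' y"
proof (cases "y = 0")
  case True then show ?thesis by (simp add: brack_def)
next
  case False
  have "brack (x + x') y * norm y =
      norm (((y \<bullet> y) *\<^sub>R x - (x \<bullet> y) *\<^sub>R y) + ((y \<bullet> y) *\<^sub>R x' - (x' \<bullet> y) *\<^sub>R y))"
    unfolding brack_mult_norm by (simp add: algebra_simps inner_add_left)
  also have "\<dots> \<le> brack x y * norm y + brack x' y * norm y"
    unfolding brack_mult_norm by (rule norm_triangle_ineq)
  finally show ?thesis using False by (simp add: distrib_right[symmetric])
qed

lemma brack_eq_0_imp_span:
  assumes x: "x \<noteq> 0" and "brack x y = 0"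
  shows "y \<in> span {x}"
proof (cases "y = 0")
  case False
  have e: "(y \<bullet> y) *\<^sub>R x = (x \<bullet> y) *\<^sub>R y" using brack_mult_norm[of x y] assms by simp
  then have "x \<bullet> y \<noteq> 0" using x False by auto
  have "((y \<bullet> y) / (x \<bullet> y)) *\<^sub>R x = (1 / (x \<bullet> y)) *\<^sub>R ((y \<bullet> y) *\<^sub>R x)" by simp
  also have "\<dots> = y" using e \<open>x \<bullet> y \<noteq> 0\<close> by simp
  finally show ?thesis by (metis span_mul span_base singletonI)
qed (simp add: span_zero)

lemma brack_measurable [measurable (raw)]:
  fixes f g :: "'a \<Rightarrow> real^'n"
  assumes [measurable]: "f \<in> borel_measurable M" "g \<in> borel_measurable M"
  shows "(\<lambda>x. brack (f x) (g x)) \<in> borel_measurable M"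
  unfolding brack_def by measurable

(* Only here is n \<ge> 2 needed: for n = 1 every u is parallel to x. *)
lemma AE_brack_nonzero:
  fixes x :: "real^'n"
  assumes x: "x \<noteq> 0" and n: "CARD('n) \<ge> 2"
  shows "AE v in sphere_prob. brack x v \<noteq> 0"
proof (rule AE_sphere_prob_from_ball)
  have "dim (span {x}) < DIM(real^'n)"
    using dim_le_card[of "{x}" "span {x}"] n by (simp add: span_superset)
  then have "span {x} \<in> null_sets lebesgue"
    using negligible_lowdim negligible_iff_null_sets by blast
  then have "AE y in lebesgue. y \<notin> span {x}"
    by (rule AE_I') auto
  then show "AE y in lebesgue. y \<in> ball 0 1 \<longrightarrow> brack x (sgn y) \<noteq> 0"
  proof (rule AE_mp, intro AE_I2 impI)
    fix y :: "real^'n" assume y: "y \<notin> span {x}"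
    then have "y \<noteq> 0" using span_zero by auto
    moreover have "brack x y \<noteq> 0" using brack_eq_0_imp_span[OF x] y by blast
    ultimately show "brack x (sgn y) \<noteq> 0"
      by (simp add: sgn_div_norm brack_scaleR_right)
  qed
qed simp

lemma powr_convex_combination_le:
  fixes a b t p :: real
  assumes "p \<ge> 1" "0 \<le> a" "0 \<le> b" "0 \<le> t" "t \<le> 1"
  shows "((1 - t) * a + t * b) powr p \<le> (1 - t) * a powr p + t * b powr p"
proof -
  have scale: "(s * c) powr p \<le> s * c powr p" if "0 \<le> s" "s \<le> 1" "0 \<le> c" for s c :: real
  proof -
    have "s powr p \<le> s powr 1" using that assms(1) by (intro powr_mono') auto
    then show ?thesis using that by (simp add: powr_mult mult_right_mono)
  qed
  show ?thesis
  proof (cases "a = 0 \<or> b = 0")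
    case True
    then show ?thesis using scale[of t b] scale[of "1 - t" a] assms by auto
  next
    case False
    then show ?thesis using convex_onD[OF powr_convex[OF assms(1)], of t a b] assms by simp
  qed
qed

section \<open>Gauge functions\<close>

lemma convex_sublevel_set:
  fixes f :: "'a::real_vector \<Rightarrow> real"
  assumes "convex_on UNIV f"
  shows "convex {x. f x \<le> c}"
proof (rule convexI)
  fix x y and u v :: real assume xy: "x \<in> {x. f x \<le> c}" "y \<in> {x. f x \<le> c}" and uv: "0 \<le> u" "0 \<le> v" "u + v = 1"
  have "f (u *\<^sub>R x + v *\<^sub>R y) \<le> u * f x + v * f y"
    using assms uv unfolding convex_on_def by auto
  also have "\<dots> \<le> u * c + v * c"
    using xy uv by (intro add_mono mult_left_mono) auto
  finally show "u *\<^sub>R x + v *\<^sub>R y \<in> {x. f x \<le> c}" using uv by (simp add: distrib_right[symmetric])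
qed

locale convex_gauge =
  fixes h :: "real^'n \<Rightarrow> real"
  assumes scaleR: "\<And>t x. h (t *\<^sub>R x) = \<bar>t\<bar> * h x"
    and add_le: "\<And>x y. h (x + y) \<le> h x + h y"
    and pos: "\<And>x. x \<noteq> 0 \<Longrightarrow> h x > 0"
begin

lemma zero [simp]: "h 0 = 0"
  using scaleR[of 0 0] by simp

lemma nonneg: "h x \<ge> 0"
  using pos[of x] by (cases "x = 0") auto

lemma convex: "convex_on UNIV h"
proof (rule convex_onI)
  fix x y :: "real^'n" and t :: real assume "0 < t" "t < 1"
  then show "h ((1 - t) *\<^sub>R x + t *\<^sub>R y) \<le> (1 - t) * h x + t * h y"
    using add_le[of "(1 - t) *\<^sub>R x" "t *\<^sub>R y"] by (simp add: scaleR)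
qed simp

lemma continuous: "continuous_on UNIV h"
  by (rule convex_on_continuous[OF open_UNIV convex])

lemma borel [measurable]: "h \<in> borel_measurable borel"
  by (rule borel_measurable_continuous_onI[OF continuous])

lemma polar_support_eq_unit_ball: "polar {z. \<forall>x. z \<bullet> x \<le> h x} = {x. h x \<le> 1}"
proof (intro set_eqI iffI)
  fix x assume "x \<in> {x. h x \<le> 1}"
  then show "x \<in> polar {z. \<forall>x. z \<bullet> x \<le> h x}"
    unfolding polar_def by (auto simp: inner_commute intro: order_trans)
next
  fix x assume x: "x \<in> polar {z. \<forall>x. z \<bullet> x \<le> h x}"
  show "x \<in> {x. h x \<le> 1}"
  proof (rule ccontr)
    assume nx: "x \<notin> {x. h x \<le> 1}"
    have "convex {x. h x \<le> 1}"
      using convex by (rule convex_sublevel_set)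
    moreover have "closed {x. h x \<le> 1}"
      using continuous by (intro closed_Collect_le) (auto intro: continuous_on_const)
    ultimately obtain a b where ab: "a \<bullet> x < b" "\<forall>y\<in>{x. h x \<le> 1}. b < a \<bullet> y"
      using separating_hyperplane_closed_point nx by blast
    have b: "b < 0" using ab(2)[rule_format, of 0] by simp
    have "(1 / b) *\<^sub>R a \<in> {z. \<forall>x. z \<bullet> x \<le> h x}"
    proof (intro CollectI allI)
      fix y show "(1 / b) *\<^sub>R a \<bullet> y \<le> h y"
      proof (cases "y = 0")
        case False
        then have "h y > 0" by (rule pos)
        then have "b < a \<bullet> ((1 / h y) *\<^sub>R y)"
          using ab(2)[rule_format, of "(1 / h y) *\<^sub>R y"] by (simp add: scaleR)
        then show ?thesis using b \<open>h y > 0\<close> by (simp add: field_simps)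
      qed simp
    qed
    then have "x \<bullet> ((1 / b) *\<^sub>R a) \<le> 1" using x unfolding polar_def by blast
    then show False using ab(1) b by (simp add: inner_commute field_simps)
  qed
qed

lemma unit_ball_eq_star_set: "{x. h x \<le> 1} = star_set (\<lambda>u. inverse (h u))"
proof -
  have key: "h x \<le> 1 \<longleftrightarrow> norm x \<le> inverse (h (sgn x))" if "x \<noteq> 0" for x
  proof -
    have "h (sgn x) > 0" using that by (intro pos) (simp add: sgn_zero_iff)
    moreover have "h x = norm x * h (sgn x)"
      using scaleR[of "norm x" "sgn x"] that by (simp add: sgn_div_norm)
    ultimately show ?thesis by (simp add: field_simps)
  qed
  have "\<forall>u\<in>sphere 0 1. 0 \<le> inverse (h u)" using nonneg by simp
  show ?thesis
    unfolding star_set_eq[OF \<open>\<forall>u\<in>sphere 0 1. 0 \<le> inverse (h u)\<close>]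
  proof (intro set_eqI)
    fix x :: "real^'n"
    show "x \<in> {x. h x \<le> 1} \<longleftrightarrow> x \<in> {x. x = 0 \<or> norm x \<le> inverse (h (sgn x))}"
      using key[of x] by (cases "x = 0") auto
  qed
qed

lemma bounds_on_sphere: "\<exists>m M. 0 < m \<and> (\<forall>u\<in>sphere 0 1. m \<le> h u \<and> h u \<le> M)"
proof -
  have c: "continuous_on (sphere 0 1) h" using continuous by (rule continuous_on_subset) simp
  have ne: "sphere (0::real^'n) 1 \<noteq> {}" by simp
  obtain x0 where x0: "x0 \<in> sphere (0::real^'n) 1" "\<forall>y\<in>sphere 0 1. h x0 \<le> h y"
    using continuous_attains_inf[OF compact_sphere ne c] by blast
  obtain x1 where "\<forall>y\<in>sphere (0::real^'n) 1. h y \<le> h x1"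
    using continuous_attains_sup[OF compact_sphere ne c] by blast
  moreover have "h x0 > 0" using x0 by (intro pos) auto
  ultimately show ?thesis using x0 by blast
qed

end

lemma convex_gaugeI_convex_unit_ball:
  fixes h :: "real^'n \<Rightarrow> real"
  assumes scaleR: "\<And>t x. h (t *\<^sub>R x) = \<bar>t\<bar> * h x"
    and pos: "\<And>x. x \<noteq> 0 \<Longrightarrow> h x > 0"
    and convex_ball: "convex {x. h x \<le> 1}"
  shows "convex_gauge h"
proof
  fix x y :: "real^'n"
  show "h (x + y) \<le> h x + h y"
  proof (cases "x = 0 \<or> y = 0")
    case True
    then show ?thesis using scaleR[of 0 0] by auto
  next
    case False
    then have a: "h x > 0" and b: "h y > 0" using pos by auto
    have "(h x / (h x + h y)) *\<^sub>R ((1 / h x) *\<^sub>R x) + (h y / (h x + h y)) *\<^sub>R ((1 / h y) *\<^sub>R y)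
        \<in> {x. h x \<le> 1}"
      using a b by (intro convexD[OF convex_ball]) (auto simp: scaleR add_divide_distrib[symmetric])
    moreover have "(h x / (h x + h y)) *\<^sub>R ((1 / h x) *\<^sub>R x) + (h y / (h x + h y)) *\<^sub>R ((1 / h y) *\<^sub>R y)
        = (1 / (h x + h y)) *\<^sub>R (x + y)"
      using a b by (simp add: scaleR_add_right)
    ultimately have "h ((1 / (h x + h y)) *\<^sub>R (x + y)) \<le> 1" by (metis mem_Collect_eq)
    then show ?thesis using a b by (simp add: scaleR divide_le_eq)
  qed
qed (fact scaleR pos)+

lemma convex_gauge_root_of_homogeneous:
  fixes \<phi> :: "real^'n \<Rightarrow> real"
  assumes p: "p \<ge> 1" and C: "C > 0" and nonneg: "\<And>x. \<phi> x \<ge> 0"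
    and scaleR: "\<And>t x. \<phi> (t *\<^sub>R x) = \<bar>t\<bar> powr p * \<phi> x"
    and convex: "convex_on UNIV \<phi>"
    and pos: "\<And>x. x \<noteq> 0 \<Longrightarrow> \<phi> x > 0"
  shows "convex_gauge (\<lambda>x. (C * \<phi> x) powr (1 / p))"
proof (rule convex_gaugeI_convex_unit_ball)
  fix t and x :: "real^'n"
  show "(C * \<phi> (t *\<^sub>R x)) powr (1 / p) = \<bar>t\<bar> * (C * \<phi> x) powr (1 / p)"
    using p C nonneg[of x] by (simp add: scaleR powr_mult powr_powr mult.left_commute)
next
  fix x :: "real^'n" assume "x \<noteq> 0"
  then show "(C * \<phi> x) powr (1 / p) > 0" using pos[of x] C by simp
next
  have "(C * \<phi> x) powr (1 / p) \<le> 1 \<longleftrightarrow> C * \<phi> x \<le> 1" for x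
  proof
    assume "(C * \<phi> x) powr (1 / p) \<le> 1"
    then have "((C * \<phi> x) powr (1 / p)) powr p \<le> 1 powr p" using p by (intro powr_mono2) auto
    then show "C * \<phi> x \<le> 1" using p C nonneg[of x] by (simp add: powr_powr)
  next
    assume "C * \<phi> x \<le> 1"
    then show "(C * \<phi> x) powr (1 / p) \<le> 1"
      using p C nonneg[of x] powr_mono2[of "1 / p" "C * \<phi> x" 1] by simp
  qed
  moreover have "convex_on UNIV (\<lambda>x. C * \<phi> x)"
    using convex C by (simp add: convex_on_cmul)
  then have "convex {x. C * \<phi> x \<le> 1}" by (rule convex_sublevel_set)
  ultimately show "convex {x. (C * \<phi> x) powr (1 / p) \<le> 1}" by simp
qed

section \<open>The support function of Lambda p K\<close>

definition sine_transform :: "real \<Rightarrow> (real^'n \<Rightarrow> real) \<Rightarrow> real^'n \<Rightarrow> real" where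
  "sine_transform p \<rho> x = (\<integral>v. \<rho> v powr (real CARD('n) + p) * brack x v powr p \<partial>sphere_prob)"

lemma sine_transform_measurable [measurable]:
  fixes \<rho> :: "real^'n \<Rightarrow> real"
  assumes [measurable]: "\<rho> \<in> borel_measurable borel"
  shows "sine_transform p \<rho> \<in> borel_measurable borel"
proof -
  have "sine_transform p \<rho> \<in> borel_measurable (sphere_prob :: (real^'n) measure)"
    unfolding sine_transform_def
    by (rule sphere_prob.borel_measurable_lebesgue_integral)
      (simp add: measurable_cong_sets[OF sets_pair_measure_cong[OF sets_sphere_prob sets_sphere_prob] refl])
  then show ?thesis by simp
qed

definition Lambda_const :: "nat \<Rightarrow> real \<Rightarrow> real" where
  "Lambda_const n p = n / ((n + p) * ctilde n p)"

lemma Lambda_const_pos: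
  assumes "n \<ge> 2" "p \<ge> 1"
  shows "Lambda_const n p > 0"
proof -
  have "omega s > 0" if "s \<ge> 0" for s
    unfolding omega_def using that by (intro divide_pos_pos) auto
  then have "ctilde n p > 0"
    unfolding ctilde_def using assms by (intro divide_pos_pos mult_pos_pos) auto
  then show ?thesis unfolding Lambda_const_def using assms by simp
qed

locale Lstar_radial =
  fixes p :: real and \<rho> :: "real^'n \<Rightarrow> real"
  assumes p: "p \<ge> 1" and dim: "CARD('n) \<ge> 2"
    and measurable [measurable]: "\<rho> \<in> borel_measurable borel"
    and nonneg: "\<forall>u\<in>sphere 0 1. 0 \<le> \<rho> u"
    and integrable: "integrable sphere_prob (\<lambda>u. \<rho> u powr (real CARD('n) + p))"
    and vol_pos: "vol (star_set \<rho>) > 0"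
begin

lemma star_set_borel [measurable]: "star_set \<rho> \<in> sets borel"
  using nonneg by (rule star_set_borel) simp

lemma integrable_powr_dim: "integrable sphere_prob (\<lambda>u. \<rho> u powr real CARD('n))"
  using p by (intro integrable_powr_smaller_exponent[OF measurable _ _ nonneg integrable]) auto

lemma vol_eq: "vol (star_set \<rho>) = measure lborel (ball (0::real^'n) 1) * normalized_vol \<rho>"
  using nonneg measurable integrable_powr_dim by (rule vol_star_set)

lemma normalized_vol_pos: "normalized_vol \<rho> > 0"
  using vol_pos content_ball_pos[of 1 "0::real^'n"] vol_eq by (simp add: zero_less_mult_iff)

lemma integrable_sine_integrand:
  "integrable sphere_prob (\<lambda>v. \<rho> v powr (real CARD('n) + p) * brack x v powr p)"
proof (rule Bochner_Integration.integrable_bound)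
  show "integrable sphere_prob (\<lambda>v. norm x powr p * \<rho> v powr (real CARD('n) + p))"
    using integrable by simp
  show "AE v in sphere_prob. norm (\<rho> v powr (real CARD('n) + p) * brack x v powr p) \<le>
      norm (norm x powr p * \<rho> v powr (real CARD('n) + p))"
  proof (rule AE_sphere_probI)
    fix v :: "real^'n" assume "norm v = 1"
    then have "brack x v powr p \<le> norm x powr p"
      using brack_le_norm_mult[of x v] p by (intro powr_mono2) auto
    then show "norm (\<rho> v powr (real CARD('n) + p) * brack x v powr p) \<le>
        norm (norm x powr p * \<rho> v powr (real CARD('n) + p))"
      by (simp add: mult.commute mult_right_mono)
  qed
qed simp

lemma sine_transform_nonneg: "sine_transform p \<rho> x \<ge> 0"
  unfolding sine_transform_def by (intro integral_nonneg_AE) auto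

lemma sine_transform_scaleR: "sine_transform p \<rho> (t *\<^sub>R x) = \<bar>t\<bar> powr p * sine_transform p \<rho> x"
  unfolding sine_transform_def
  by (simp add: brack_scaleR_left powr_mult mult.left_commute)

lemma sine_transform_convex: "convex_on UNIV (sine_transform p \<rho>)"
proof (rule convex_onI)
  fix x y :: "real^'n" and t :: real assume t: "0 < t" "t < 1"
  let ?w = "\<lambda>v. \<rho> v powr (real CARD('n) + p)"
  have bound: "brack ((1 - t) *\<^sub>R x + t *\<^sub>R y) v powr p \<le> (1 - t) * brack x v powr p + t * brack y v powr p"
    for v
  proof -
    have "brack ((1 - t) *\<^sub>R x + t *\<^sub>R y) v \<le> (1 - t) * brack x v + t * brack y v"
      using brack_add_left_le[of "(1 - t) *\<^sub>R x" "t *\<^sub>R y" v] t by (simp add: brack_scaleR_left)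
    then have "brack ((1 - t) *\<^sub>R x + t *\<^sub>R y) v powr p \<le> ((1 - t) * brack x v + t * brack y v) powr p"
      using p by (intro powr_mono2) auto
    also have "\<dots> \<le> (1 - t) * brack x v powr p + t * brack y v powr p"
      using p t by (intro powr_convex_combination_le) auto
    finally show ?thesis .
  qed
  have "sine_transform p \<rho> ((1 - t) *\<^sub>R x + t *\<^sub>R y) \<le>
      (\<integral>v. (1 - t) * (?w v * brack x v powr p) + t * (?w v * brack y v powr p) \<partial>sphere_prob)"
    unfolding sine_transform_def
  proof (rule integral_mono)
    show "integrable sphere_prob (\<lambda>v. (1 - t) * (?w v * brack x v powr p) + t * (?w v * brack y v powr p))"
      using integrable_sine_integrand[of x] integrable_sine_integrand[of y] by simp
    fix v
    show "?w v * brack ((1 - t) *\<^sub>R x + t *\<^sub>R y) v powr p \<le>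
        (1 - t) * (?w v * brack x v powr p) + t * (?w v * brack y v powr p)"
      using mult_left_mono[OF bound[of v], of "?w v"] by (simp add: algebra_simps)
  qed (rule integrable_sine_integrand)
  also have "\<dots> = (1 - t) * sine_transform p \<rho> x + t * sine_transform p \<rho> y"
    unfolding sine_transform_def using integrable_sine_integrand by simp
  finally show "sine_transform p \<rho> ((1 - t) *\<^sub>R x + t *\<^sub>R y) \<le>
      (1 - t) * sine_transform p \<rho> x + t * sine_transform p \<rho> y" .
qed simp

lemma sine_transform_pos:
  assumes x: "x \<noteq> 0"
  shows "sine_transform p \<rho> x > 0"
proof (rule ccontr)
  assume "\<not> sine_transform p \<rho> x > 0"
  then have "sine_transform p \<rho> x = 0" using sine_transform_nonneg[of x] by simp
  then have "AE v in sphere_prob. \<rho> v powr (real CARD('n) + p) * brack x v powr p = 0"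
    using integrable_sine_integrand[of x]
    unfolding sine_transform_def by (subst (asm) integral_nonneg_eq_0_iff_AE) auto
  then have "AE v in sphere_prob. \<rho> v powr real CARD('n) = 0"
    using AE_brack_nonzero[OF x dim] by eventually_elim simp
  then have "normalized_vol \<rho> = 0" unfolding normalized_vol_def by (simp add: integral_eq_zero_AE)
  then show False using normalized_vol_pos by simp
qed

lemma set_integral_brack_powr:
  "(LINT y:star_set \<rho>|lebesgue. brack x y powr p) =
    measure lborel (ball (0::real^'n) 1) * (CARD('n) / (CARD('n) + p)) * sine_transform p \<rho> x"
proof -
  let ?c = "real CARD('n) / (real CARD('n) + p)"
  have "(LINT y:star_set \<rho>|lebesgue. brack x y powr p) =
      enn2real (\<integral>\<^sup>+y. indicator (star_set \<rho>) y * ennreal (brack x y powr p) \<partial>lborel)"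
    unfolding set_lebesgue_integral_def
    by (subst integral_eq_nn_integral)
      (auto intro!: measurable_completion simp: nn_integral_completion indicator_mult_ennreal mult.commute)
  also have "(\<integral>\<^sup>+y. indicator (star_set \<rho>) y * ennreal (brack x y powr p) \<partial>lborel) =
      emeasure lborel (ball (0::real^'n) 1) *
      (\<integral>\<^sup>+u. ennreal (?c * (\<rho> u powr (real CARD('n) + p) * brack x u powr p)) \<partial>sphere_prob)"
    using p
    by (subst nn_integral_star_set_homogeneous[OF nonneg measurable])
      (auto simp: brack_scaleR_right powr_mult mult_ac)
  also have "(\<integral>\<^sup>+u. ennreal (?c * (\<rho> u powr (real CARD('n) + p) * brack x u powr p)) \<partial>sphere_prob) =
      ennreal (?c * sine_transform p \<rho> x)"
    unfolding sine_transform_def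
    using p integrable_sine_integrand[of x, THEN integrable_mult_right[where c="?c"]]
    by (subst nn_integral_eq_integral) auto
  finally show ?thesis
    using p sine_transform_nonneg[of x]
    by (simp add: emeasure_lborel_unit_ball enn2real_mult ennreal_mult[symmetric] mult_ac)
qed

lemma hLambda_eq:
  "hLambda p (star_set \<rho>) x = (Lambda_const CARD('n) p / normalized_vol \<rho> * sine_transform p \<rho> x) powr (1 / p)"
proof -
  have "1 / (ctilde CARD('n) p * vol (star_set \<rho>)) * (LINT y:star_set \<rho>|lebesgue. brack x y powr p) =
      Lambda_const CARD('n) p / normalized_vol \<rho> * sine_transform p \<rho> x"
    unfolding set_integral_brack_powr vol_eq Lambda_const_def
    using content_ball_pos[of 1 "0::real^'n"] by (simp add: field_simps)
  then show ?thesis by (simp only: hLambda_def)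
qed

lemma hLambda_powr:
  "hLambda p (star_set \<rho>) x powr p = Lambda_const CARD('n) p / normalized_vol \<rho> * sine_transform p \<rho> x"
  using Lambda_const_pos[OF dim p] normalized_vol_pos sine_transform_nonneg[of x] p
  by (simp add: hLambda_eq powr_powr)

lemma convex_gauge_hLambda: "convex_gauge (hLambda p (star_set \<rho>))"
  unfolding hLambda_eq[abs_def] using p Lambda_const_pos[OF dim p] normalized_vol_pos
  by (intro convex_gauge_root_of_homogeneous sine_transform_nonneg sine_transform_scaleR
      sine_transform_convex sine_transform_pos) auto

end

lemma Lstar_obtain_radial:
  fixes K :: "(real^'n) set"
  assumes "p \<ge> 1" "CARD('n) \<ge> 2" "Lstar p K" "vol K > 0"
  obtains \<rho> where "Lstar_radial p \<rho>" "K = star_set \<rho>"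
  using assms unfolding Lstar_iff_star_set Lstar_radial_def by blast

lemma AE_radial_star_set_eq_iff:
  fixes \<rho> \<sigma> :: "real^'n \<Rightarrow> real"
  assumes "\<forall>u\<in>sphere 0 1. 0 \<le> \<rho> u" "\<forall>u\<in>sphere 0 1. 0 \<le> \<sigma> u"
  shows "(AE u in sphere_prob. radial (star_set \<rho>) u = radial (star_set \<sigma>) u) \<longleftrightarrow>
    (AE u in sphere_prob. \<rho> u = \<sigma> u)"
  using assms by (intro eventually_cong[OF AE_sphere_prob_norm]) (simp add: radial_star_set)

context convex_gauge
begin

lemma integrable_mult_powr:
  assumes "integrable sphere_prob f" and "q \<ge> 0"
  shows "integrable sphere_prob (\<lambda>u. f u * h u powr q)"
proof -
  obtain M where M: "\<forall>u\<in>sphere (0::real^'n) 1. h u \<le> M"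
    using bounds_on_sphere by blast
  show ?thesis
  proof (rule Bochner_Integration.integrable_bound)
    show "integrable sphere_prob (\<lambda>u. M powr q * f u)"
      using assms(1) by simp
    show "AE u in sphere_prob. norm (f u * h u powr q) \<le> norm (M powr q * f u)"
    proof (rule AE_sphere_probI)
      fix u :: "real^'n" assume "norm u = 1"
      then have "h u powr q \<le> M powr q" using M assms(2) nonneg[of u] by (intro powr_mono2) auto
      then show "norm (f u * h u powr q) \<le> norm (M powr q * f u)"
        by (simp add: abs_mult mult.commute mult_left_mono)
    qed
  qed (use assms(1) borel_measurable_integrable in simp)
qed

lemma Lstar_radial_inverse:
  assumes p: "p \<ge> 1" and dim: "CARD('n) \<ge> 2"
  shows "Lstar_radial p (\<lambda>u. inverse (h u))"
proof -
  obtain m M where mM: "0 < m" "\<forall>u\<in>sphere (0::real^'n) 1. m \<le> h u \<and> h u \<le> M"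
    using bounds_on_sphere by blast
  have nonneg': "\<forall>u\<in>sphere (0::real^'n) 1. 0 \<le> inverse (h u)" using nonneg by simp
  have int: "integrable sphere_prob (\<lambda>u. inverse (h u) powr (real CARD('n) + p))"
  proof (rule sphere_prob.integrable_const_bound[where B="(1 / m) powr (real CARD('n) + p)"])
    show "AE u in sphere_prob. norm (inverse (h u) powr (real CARD('n) + p)) \<le> (1 / m) powr (real CARD('n) + p)"
    proof (rule AE_sphere_probI)
      fix u :: "real^'n" assume "norm u = 1"
      then have "m \<le> h u" using mM by auto
      then have "inverse (h u) \<le> inverse m" using mM(1) by (rule le_imp_inverse_le)
      then have "inverse (h u) \<le> 1 / m" by (simp add: inverse_eq_divide)
      then show "norm (inverse (h u) powr (real CARD('n) + p)) \<le> (1 / m) powr (real CARD('n) + p)"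
        using p nonneg[of u] by (simp add: powr_mono2)
    qed
  qed simp
  have intN: "integrable sphere_prob (\<lambda>u. inverse (h u) powr real CARD('n))"
    by (rule integrable_powr_smaller_exponent[OF _ _ _ nonneg' int]) (use p in auto)
  obtain u0 :: "real^'n" where "norm u0 = 1" using vector_choose_size[of 1] by auto
  then have M: "M > 0" using mM by force
  have "inverse M powr real CARD('n) \<le> normalized_vol (\<lambda>u. inverse (h u))"
    unfolding normalized_vol_def
  proof (rule order_trans[OF _ Bochner_Integration.integral_mono_AE])
    show "AE u in sphere_prob. inverse M powr real CARD('n) \<le> inverse (h u) powr real CARD('n)"
    proof (rule AE_sphere_probI)
      fix u :: "real^'n" assume "norm u = 1"
      then have "h u \<le> M" "0 < h u" using mM by (auto intro: less_le_trans)
      then have "inverse M \<le> inverse (h u)" by (rule le_imp_inverse_le)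
      then show "inverse M powr real CARD('n) \<le> inverse (h u) powr real CARD('n)"
        using M by (intro powr_mono2) auto
    qed
  qed (use intN in auto)
  moreover have "inverse M powr real CARD('n) > 0" using M by simp
  ultimately have "normalized_vol (\<lambda>u. inverse (h u)) > 0" by linarith
  then have "vol (star_set (\<lambda>u. inverse (h u))) > 0"
    using vol_star_set[OF nonneg' _ intN] content_ball_pos[of 1 "0::real^'n"] by simp
  then show ?thesis
    using p dim nonneg' int by unfold_locales auto
qed

end

context Lstar_radial
begin

lemma LambdaPolar_star_set:
  "LambdaPolar p (star_set \<rho>) = star_set (\<lambda>u. inverse (hLambda p (star_set \<rho>) u))"
proof -
  interpret convex_gauge "hLambda p (star_set \<rho>)" by (rule convex_gauge_hLambda)
  show ?thesis
    unfolding LambdaPolar_def Lambda_def polar_support_eq_unit_ball unit_ball_eq_star_set ..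
qed

lemma Lstar_radial_LambdaPolar: "Lstar_radial p (\<lambda>u. inverse (hLambda p (star_set \<rho>) u))"
proof -
  interpret convex_gauge "hLambda p (star_set \<rho>)" by (rule convex_gauge_hLambda)
  show ?thesis using p dim by (rule Lstar_radial_inverse)
qed

lemma integral_powr_sine_transform_eq_nn_integral:
  assumes [measurable]: "\<sigma> \<in> borel_measurable borel"
  shows "(\<integral>u. \<sigma> u powr (real CARD('n) + p) * sine_transform p \<rho> u \<partial>sphere_prob) =
    enn2real (\<integral>\<^sup>+u. (\<integral>\<^sup>+v. ennreal (\<sigma> u powr (real CARD('n) + p) *
      \<rho> v powr (real CARD('n) + p) * brack u v powr p) \<partial>sphere_prob) \<partial>sphere_prob)"
proof -
  have "ennreal (\<sigma> u powr (real CARD('n) + p) * sine_transform p \<rho> u) =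
      (\<integral>\<^sup>+v. ennreal (\<sigma> u powr (real CARD('n) + p) * \<rho> v powr (real CARD('n) + p) * brack u v powr p)
        \<partial>sphere_prob)" for u
  proof -
    have "ennreal (sine_transform p \<rho> u) =
        (\<integral>\<^sup>+v. ennreal (\<rho> v powr (real CARD('n) + p) * brack u v powr p) \<partial>sphere_prob)"
      unfolding sine_transform_def by (rule nn_integral_eq_integral[symmetric, OF integrable_sine_integrand]) auto
    then show ?thesis
      using sine_transform_nonneg[of u]
      by (simp add: ennreal_mult nn_integral_cmult[symmetric] mult.assoc)
  qed
  then show ?thesis
    using sine_transform_nonneg by (subst integral_eq_nn_integral) auto
qed

end

interpretation sphere_prob_pair: pair_sigma_finite "sphere_prob :: (real^'n) measure" sphere_prob
  by (simp add: pair_sigma_finite_def sphere_prob.sigma_finite_measure_axioms)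

lemma integral_powr_sine_transform_symmetric:
  fixes \<sigma> \<rho> :: "real^'n \<Rightarrow> real"
  assumes \<sigma>: "Lstar_radial p \<sigma>" and \<rho>: "Lstar_radial p \<rho>"
  shows "(\<integral>u. \<sigma> u powr (real CARD('n) + p) * sine_transform p \<rho> u \<partial>sphere_prob) =
    (\<integral>u. \<rho> u powr (real CARD('n) + p) * sine_transform p \<sigma> u \<partial>sphere_prob)"
proof -
  interpret \<sigma>: Lstar_radial p \<sigma> by (rule \<sigma>)
  interpret \<rho>: Lstar_radial p \<rho> by (rule \<rho>)
  have "(\<integral>\<^sup>+u. (\<integral>\<^sup>+v. ennreal (\<sigma> u powr (real CARD('n) + p) * \<rho> v powr (real CARD('n) + p) *
        brack u v powr p) \<partial>sphere_prob) \<partial>sphere_prob) =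
      (\<integral>\<^sup>+v. (\<integral>\<^sup>+u. ennreal (\<rho> v powr (real CARD('n) + p) * \<sigma> u powr (real CARD('n) + p) *
        brack v u powr p) \<partial>sphere_prob) \<partial>sphere_prob)"
    by (subst sphere_prob_pair.Fubini') (auto simp: brack_sym mult_ac
        measurable_cong_sets[OF sets_pair_measure_cong[OF sets_sphere_prob sets_sphere_prob] refl])
  then show ?thesis
    by (simp add: \<rho>.integral_powr_sine_transform_eq_nn_integral[OF \<sigma>.measurable]
        \<sigma>.integral_powr_sine_transform_eq_nn_integral[OF \<rho>.measurable])
qed

lemma integral_powr_hLambda_symmetric:
  fixes \<sigma> \<rho> :: "real^'n \<Rightarrow> real"
  assumes \<sigma>: "Lstar_radial p \<sigma>" and \<rho>: "Lstar_radial p \<rho>"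
  shows "normalized_vol \<rho> * (\<integral>u. \<sigma> u powr (real CARD('n) + p) * hLambda p (star_set \<rho>) u powr p \<partial>sphere_prob) =
    normalized_vol \<sigma> * (\<integral>u. \<rho> u powr (real CARD('n) + p) * hLambda p (star_set \<sigma>) u powr p \<partial>sphere_prob)"
proof -
  interpret \<sigma>: Lstar_radial p \<sigma> by (rule \<sigma>)
  interpret \<rho>: Lstar_radial p \<rho> by (rule \<rho>)
  have "normalized_vol \<rho> * (\<integral>u. \<sigma> u powr (real CARD('n) + p) * hLambda p (star_set \<rho>) u powr p \<partial>sphere_prob) =
      Lambda_const CARD('n) p * (\<integral>u. \<sigma> u powr (real CARD('n) + p) * sine_transform p \<rho> u \<partial>sphere_prob)"
    using \<rho>.normalized_vol_pos by (simp add: \<rho>.hLambda_powr mult.left_commute)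
  also have "\<dots> = Lambda_const CARD('n) p * (\<integral>u. \<rho> u powr (real CARD('n) + p) * sine_transform p \<sigma> u \<partial>sphere_prob)"
    by (simp add: integral_powr_sine_transform_symmetric[OF \<sigma> \<rho>])
  also have "\<dots> = normalized_vol \<sigma> * (\<integral>u. \<rho> u powr (real CARD('n) + p) * hLambda p (star_set \<sigma>) u powr p \<partial>sphere_prob)"
    using \<sigma>.normalized_vol_pos by (simp add: \<sigma>.hLambda_powr mult.left_commute)
  finally show ?thesis .
qed

(* Apply the symmetry with \<sigma> the radial function of the polar body, for which
   \<sigma>^(n+p) * h^p = \<sigma>^n. *)
lemma (in Lstar_radial) integral_powr_hLambda_LambdaPolar:
  "(\<integral>u. \<rho> u powr (real CARD('n) + p) * hLambda p (LambdaPolar p (star_set \<rho>)) u powr p \<partial>sphere_prob) =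
    normalized_vol \<rho>"
proof -
  define \<sigma> where "\<sigma> u = inverse (hLambda p (star_set \<rho>) u)" for u
  interpret \<sigma>: Lstar_radial p \<sigma> unfolding \<sigma>_def by (rule Lstar_radial_LambdaPolar)
  interpret gauge: convex_gauge "hLambda p (star_set \<rho>)" by (rule convex_gauge_hLambda)
  have "(\<integral>u. \<sigma> u powr (real CARD('n) + p) * hLambda p (star_set \<rho>) u powr p \<partial>sphere_prob) =
      normalized_vol \<sigma>"
    unfolding normalized_vol_def
  proof (intro integral_cong_AE AE_sphere_probI)
    fix u :: "real^'n" assume "norm u = 1"
    then have "hLambda p (star_set \<rho>) u > 0" by (intro gauge.pos) auto
    then show "\<sigma> u powr (real CARD('n) + p) * hLambda p (star_set \<rho>) u powr p = \<sigma> u powr real CARD('n)"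
      by (simp add: \<sigma>_def powr_add powr_mult[symmetric] mult.assoc)
  qed simp_all
  then have "normalized_vol \<rho> * normalized_vol \<sigma> = normalized_vol \<sigma> *
      (\<integral>u. \<rho> u powr (real CARD('n) + p) * hLambda p (star_set \<sigma>) u powr p \<partial>sphere_prob)"
    using integral_powr_hLambda_symmetric[OF \<sigma>.Lstar_radial_axioms Lstar_radial_axioms] by simp
  then show ?thesis
    using \<sigma>.normalized_vol_pos by (simp add: LambdaPolar_star_set \<sigma>_def[abs_def])
qed

section \<open>Young's inequality and the volume comparison\<close>

lemma young_powr_strict:
  fixes N p x :: real
  assumes N: "N \<ge> 1" and p: "p > 0" and x: "x \<ge> 0" "x \<noteq> 1"
  shows "(N + p) * x powr N < N * x powr (N + p) + p"
proof -
  define f where "f t = N * t powr (N + p) + p - (N + p) * t powr N" for t :: real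
  have deriv: "DERIV f t :> N * (N + p) * t powr (N - 1) * (t powr p - 1)" if "t > 0" for t
  proof -
    have "DERIV f t :> N * ((N + p) * t powr (N + p - 1)) - (N + p) * (N * t powr (N - 1))"
      unfolding f_def using that by (auto intro!: derivative_eq_intros)
    moreover have "t powr (N + p - 1) = t powr (N - 1) * t powr p"
      using that by (simp add: powr_add[symmetric] algebra_simps)
    ultimately show ?thesis by (simp add: algebra_simps)
  qed
  have cont: "continuous_on {a..b} f" if "0 < a" for a b
    unfolding f_def using that by (intro continuous_intros) auto
  have "f x > f 1"
  proof (cases "x < 1")
    case True
    show ?thesis
    proof (cases "x = 0")
      case True
      then show ?thesis using p N by (simp add: f_def)
    next
      case False
      with x have "x > 0" by simp
      show ?thesis
      proof (rule DERIV_neg_imp_decreasing_open[OF \<open>x < 1\<close> _ cont[OF \<open>x > 0\<close>]])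
        fix t assume t: "x < t" "t < 1"
        with \<open>x > 0\<close> have "t > 0" by simp
        moreover have "t powr p < 1 powr p" using t \<open>t > 0\<close> p by (intro powr_less_mono2) auto
        ultimately show "\<exists>y. DERIV f t :> y \<and> y < 0"
          using deriv N p by (intro exI[of _ "N * (N + p) * t powr (N - 1) * (t powr p - 1)"] conjI)
            (auto intro!: mult_pos_neg)
      qed
    qed
  next
    case False
    with x have "1 < x" by simp
    show ?thesis
    proof (rule DERIV_pos_imp_increasing_open[OF \<open>1 < x\<close> _ cont])
      fix t assume t: "1 < t" "t < x"
      then have "t > 0" by simp
      moreover have "1 powr p < t powr p" using t p by (intro powr_less_mono2) auto
      ultimately show "\<exists>y. DERIV f t :> y \<and> y > 0"
        using deriv N p by (intro exI[of _ "N * (N + p) * t powr (N - 1) * (t powr p - 1)"] conjI) auto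
    qed simp
  qed
  then show ?thesis by (simp add: f_def)
qed

(* Young's inequality for the exponents (N + p)/N and (N + p)/p, written for a and 1/h. *)
lemma young_inverse_powr:
  fixes N p a h :: real
  assumes N: "N \<ge> 1" and p: "p > 0" and a: "a \<ge> 0" and h: "h > 0"
  shows "(N + p) * a powr N \<le> N * a powr (N + p) * h powr p + p * inverse h powr N"
    and "(N + p) * a powr N = N * a powr (N + p) * h powr p + p * inverse h powr N \<longleftrightarrow> a = inverse h"
proof -
  define x where "x = a * h"
  have x: "x \<ge> 0" using a h by (simp add: x_def)
  have a_eq: "a = x * inverse h" using h by (simp add: x_def)
  have "a powr (N + p) * h powr p = x powr (N + p) * inverse h powr N * (inverse h powr p * h powr p)"
    using x h by (simp add: a_eq powr_mult powr_add mult_ac)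
  moreover have "inverse h powr p * h powr p = 1"
    using h by (subst powr_mult[symmetric]) auto
  ultimately have "a powr (N + p) * h powr p = x powr (N + p) * inverse h powr N"
    by simp
  moreover have "a powr N = x powr N * inverse h powr N"
    using x h by (simp add: a_eq powr_mult)
  ultimately have diff: "(N * a powr (N + p) * h powr p + p * inverse h powr N) - (N + p) * a powr N =
      inverse h powr N * ((N * x powr (N + p) + p) - (N + p) * x powr N)"
    by (simp add: mult.assoc algebra_simps)
  define g where "g = (N * x powr (N + p) + p) - (N + p) * x powr N"
  have "g > 0 \<or> (x = 1 \<and> g = 0)"
    using young_powr_strict[OF N p x] by (cases "x = 1") (auto simp: g_def)
  then have "inverse h powr N * g > 0 \<or> (x = 1 \<and> inverse h powr N * g = 0)"
    using h by auto
  moreover have "x = 1 \<longleftrightarrow> a = inverse h" using h by (auto simp: a_eq)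
  ultimately show "(N + p) * a powr N \<le> N * a powr (N + p) * h powr p + p * inverse h powr N"
    and "(N + p) * a powr N = N * a powr (N + p) * h powr p + p * inverse h powr N \<longleftrightarrow> a = inverse h"
    using diff unfolding g_def by auto
qed

lemma normalized_vol_le_inverse_gauge:
  fixes \<rho> h :: "real^'n \<Rightarrow> real"
  assumes "Lstar_radial p \<rho>" and "convex_gauge h"
    and normalization: "(\<integral>u. \<rho> u powr (real CARD('n) + p) * h u powr p \<partial>sphere_prob) = normalized_vol \<rho>"
  shows "normalized_vol \<rho> \<le> normalized_vol (\<lambda>u. inverse (h u))"
    and "normalized_vol (\<lambda>u. inverse (h u)) = normalized_vol \<rho> \<longleftrightarrow> (AE u in sphere_prob. \<rho> u = inverse (h u))"
proof -
  interpret \<rho>: Lstar_radial p \<rho> by fact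
  interpret h: convex_gauge h by fact
  interpret inv: Lstar_radial p "\<lambda>u. inverse (h u)" using \<rho>.p \<rho>.dim by (rule h.Lstar_radial_inverse)
  define N where "N = real CARD('n)"
  define f where "f u = N * (\<rho> u powr (N + p) * h u powr p) + p * inverse (h u) powr N - (N + p) * \<rho> u powr N"
    for u
  have f: "0 \<le> f u \<and> (f u = 0 \<longleftrightarrow> \<rho> u = inverse (h u))" if "norm u = 1" for u
  proof -
    have "0 \<le> \<rho> u" "0 < h u" using that \<rho>.nonneg by (auto intro: h.pos)
    then show ?thesis
      using young_inverse_powr[of N p "\<rho> u" "h u"] \<rho>.p unfolding f_def N_def by auto
  qed
  have int: "integrable sphere_prob f"
    unfolding f_def N_def
    using h.integrable_mult_powr[OF \<rho>.integrable, of p] \<rho>.p \<rho>.integrable_powr_dim inv.integrable_powr_dim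
    by auto
  have "(\<integral>u. f u \<partial>sphere_prob) = p * (normalized_vol (\<lambda>u. inverse (h u)) - normalized_vol \<rho>)"
    unfolding f_def N_def normalized_vol_def
    using normalization h.integrable_mult_powr[OF \<rho>.integrable, of p] \<rho>.p \<rho>.integrable_powr_dim
      inv.integrable_powr_dim
    by (simp add: normalized_vol_def algebra_simps)
  moreover have f_nonneg: "AE u in sphere_prob. 0 \<le> f u"
    using f by (intro AE_sphere_probI) auto
  moreover have "0 \<le> (\<integral>u. f u \<partial>sphere_prob)" using f_nonneg by (rule integral_nonneg_AE)
  ultimately have "0 \<le> p * (normalized_vol (\<lambda>u. inverse (h u)) - normalized_vol \<rho>)"
    "normalized_vol (\<lambda>u. inverse (h u)) = normalized_vol \<rho> \<longleftrightarrow> (AE u in sphere_prob. f u = 0)"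
    using \<rho>.p integral_nonneg_eq_0_iff_AE[OF int f_nonneg] by auto
  moreover have "(AE u in sphere_prob. f u = 0) \<longleftrightarrow> (AE u in sphere_prob. \<rho> u = inverse (h u))"
    using f by (intro eventually_cong[OF AE_sphere_prob_norm]) auto
  ultimately show "normalized_vol \<rho> \<le> normalized_vol (\<lambda>u. inverse (h u))"
    and "normalized_vol (\<lambda>u. inverse (h u)) = normalized_vol \<rho> \<longleftrightarrow> (AE u in sphere_prob. \<rho> u = inverse (h u))"
    using \<rho>.p by (auto simp: zero_le_mult_iff)
qed

theorem lemma4p2:
  fixes K :: "(real^'n) set" and p :: real
  assumes "p \<ge> 1" and "CARD('n) \<ge> 2"
    and "Lstar p K" and "vol K > 0"
  shows "vol (LambdaPolar p (LambdaPolar p K)) \<ge> vol K \<and>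
         (vol (LambdaPolar p (LambdaPolar p K)) = vol K \<longleftrightarrow>
            (AE u in sphere_prob. radial K u = radial (LambdaPolar p (LambdaPolar p K)) u))"
proof -
  obtain \<rho> where "Lstar_radial p \<rho>" and K: "K = star_set \<rho>"
    using Lstar_obtain_radial assms by blast
  interpret K: Lstar_radial p \<rho> by fact
  interpret polar: Lstar_radial p "\<lambda>u. inverse (hLambda p K u)"
    unfolding K by (rule K.Lstar_radial_LambdaPolar)
  define h where "h = hLambda p (LambdaPolar p K)"
  have polar: "LambdaPolar p K = star_set (\<lambda>u. inverse (hLambda p K u))"
    unfolding K by (rule K.LambdaPolar_star_set)
  interpret gauge: convex_gauge h
    unfolding h_def polar by (rule polar.convex_gauge_hLambda)
  interpret bipolar: Lstar_radial p "\<lambda>u. inverse (h u)"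
    using assms(1,2) by (rule gauge.Lstar_radial_inverse)
  have bipolar: "LambdaPolar p (LambdaPolar p K) = star_set (\<lambda>u. inverse (h u))"
    unfolding h_def polar by (rule polar.LambdaPolar_star_set)
  have "(\<integral>u. \<rho> u powr (real CARD('n) + p) * h u powr p \<partial>sphere_prob) = normalized_vol \<rho>"
    unfolding h_def K by (rule K.integral_powr_hLambda_LambdaPolar)
  note dual = normalized_vol_le_inverse_gauge[OF K.Lstar_radial_axioms gauge.convex_gauge_axioms this]
  show ?thesis
    unfolding bipolar bipolar.vol_eq unfolding K K.vol_eq
      AE_radial_star_set_eq_iff[OF K.nonneg bipolar.nonneg]
    using dual content_ball_pos[of 1 "0::real^'n"] by simp
qed

end
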